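(* Let $Z=(X,Y)\in\mathfrak X_S$ be as in the setup, and assume $A=-2C$. Let $$G(x,y)=H(x^2+y^2)-(H+1)xy+\frac{2CH\Lambda(y-x)}{C^2+1}+\frac{\Lambda^2(H-1)}{C^2+1},$$ and let $P_X=f_1f_2$ be the first integral of $X$ (under $A=-2C$ the exponent $-2C/A$ equals $1$). Then for all $(x,y)\in\mathbb R^2$, $$P_X(x,y,0)-P_X(-y,-x,0)=-(x+y)\,G(x,y).$$ Hence the closure condition for symmetric crossings off the line $\{x+y=0\}$ defines the conic $$\Gamma_1=\{(x,y,0): G(x,y)=0\}\subset\Sigma.$$ Moreover: - (a) $\Gamma_1$ is a pair of lines iff $H=1$; - (b) $\Gamma_1$ is a parabola iff $H=-\tfrac13$; - (c) $\Gamma_1$ is a hyperbola iff $-\tfrac13<H<1$; - (d) $\Gamma_1$ is an ellipse iff $H<-\tfrac13$ or $H>1$. The discriminant of the quadratic part of $G$ is $D(\Gamma_1)=(H+1)^2-4H^2=(1-H)(3H+1)$.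
   Context: Setup. Fix real parameters $A\neq 0$, $C$, $H$, $\Lambda$. Let $\Sigma=\{z=0\}$, $\Sigma^+=\{z\ge0\}$ and $\Sigma^-=\{z<0\}$. Define $$X(x,y,z)=\big(Ax-H(((A-C)^2+1)z-\Lambda),\ \Lambda-(1+C^2)z,\ y+2Cz\big),$$ $$Y(x,y,z)=\big(-\Lambda-(1+C^2)z,\ Ay-H(((A-C)^2+1)z+\Lambda),\ x+2Cz\big).$$ $Z$ equals $X$ on $\Sigma^+$ and $Y$ on $\Sigma^-$ (family $\mathfrak X_S$, equivariant under $S(x,y,z)=(-y,-x,-z)$). The functions $f_1$ and $f_2$ are $$f_1=y^2+2C\Big(z+\frac{\Lambda}{C^2+1}\Big)y+(C^2+1)z^2+\frac{2\Lambda(C^2-1)z}{C^2+1}+\frac{\Lambda^2}{C^2+1},\qquad f_2=x-H(Az+y).$$ They are Darboux polynomials of $X$, and $P_X=f_1f_2^{-2C/A}$ is a first integral of $X$. *)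

theory Defs
  imports Complex_Main
begin

definition f1 :: "real \<Rightarrow> real \<Rightarrow> real \<Rightarrow> real \<Rightarrow> real \<Rightarrow> real \<Rightarrow> real \<Rightarrow> real" where
  "f1 A C H \<Lambda> x y z = y\<^sup>2 + 2 * C * (z + \<Lambda> / (C\<^sup>2 + 1)) * y + (C\<^sup>2 + 1) * z\<^sup>2
      + 2 * \<Lambda> * (C\<^sup>2 - 1) * z / (C\<^sup>2 + 1) + \<Lambda>\<^sup>2 / (C\<^sup>2 + 1)"

definition f2 :: "real \<Rightarrow> real \<Rightarrow> real \<Rightarrow> real \<Rightarrow> real \<Rightarrow> real \<Rightarrow> real \<Rightarrow> real" where
  "f2 A C H \<Lambda> x y z = x - H * (A * z + y)"

text \<open>First integral P_X = f1 * f2^(-2C/A); under A = -2C the exponent is 1.\<close>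
definition PX1 :: "real \<Rightarrow> real \<Rightarrow> real \<Rightarrow> real \<Rightarrow> real \<Rightarrow> real \<Rightarrow> real \<Rightarrow> real" where
  "PX1 A C H \<Lambda> x y z = f1 A C H \<Lambda> x y z * f2 A C H \<Lambda> x y z"

definition G :: "real \<Rightarrow> real \<Rightarrow> real \<Rightarrow> real \<Rightarrow> real \<Rightarrow> real" where
  "G C H \<Lambda> x y = H * (x\<^sup>2 + y\<^sup>2) - (H + 1) * x * y + 2 * C * H * \<Lambda> * (y - x) / (C\<^sup>2 + 1)
      + \<Lambda>\<^sup>2 * (H - 1) / (C\<^sup>2 + 1)"

definition Gamma1 :: "real \<Rightarrow> real \<Rightarrow> real \<Rightarrow> (real \<times> real \<times> real) set" where
  "Gamma1 C H \<Lambda> = {(x, y, z). z = 0 \<and> G C H \<Lambda> x y = 0}"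

definition conic_coeffs :: "(real \<Rightarrow> real \<Rightarrow> real) \<Rightarrow> real \<Rightarrow> real \<Rightarrow> real \<Rightarrow> real \<Rightarrow> real \<Rightarrow> real \<Rightarrow> bool" where
  "conic_coeffs q a b c d e f \<longleftrightarrow> (a, b, c) \<noteq> (0, 0, 0) \<and>
     (\<forall>x y. q x y = a * x\<^sup>2 + b * x * y + c * y\<^sup>2 + d * x + e * y + f)"

definition conic_disc :: "real \<Rightarrow> real \<Rightarrow> real \<Rightarrow> real" where
  "conic_disc a b c = b\<^sup>2 - 4 * a * c"

definition conic_det :: "real \<Rightarrow> real \<Rightarrow> real \<Rightarrow> real \<Rightarrow> real \<Rightarrow> real \<Rightarrow> real" where
  "conic_det a b c d e f =
     a * (c * f - (e/2)\<^sup>2) - (b/2) * ((b/2) * f - (e/2) * (d/2)) + (d/2) * ((b/2) * (e/2) - c * (d/2))"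

definition is_ellipse :: "(real \<Rightarrow> real \<Rightarrow> real) \<Rightarrow> bool" where
  "is_ellipse q \<longleftrightarrow> (\<exists>a b c d e f. conic_coeffs q a b c d e f \<and> conic_disc a b c < 0)"

definition is_hyperbola :: "(real \<Rightarrow> real \<Rightarrow> real) \<Rightarrow> bool" where
  "is_hyperbola q \<longleftrightarrow> (\<exists>a b c d e f. conic_coeffs q a b c d e f \<and> conic_disc a b c > 0)"

definition is_parabola :: "(real \<Rightarrow> real \<Rightarrow> real) \<Rightarrow> bool" where
  "is_parabola q \<longleftrightarrow> (\<exists>a b c d e f. conic_coeffs q a b c d e f \<and> conic_disc a b c = 0
                                          \<and> conic_det a b c d e f \<noteq> 0)"

definition is_pair_of_lines :: "(real \<Rightarrow> real \<Rightarrow> real) \<Rightarrow> bool" where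
  "is_pair_of_lines q \<longleftrightarrow> (\<exists>p1 s1 r1 p2 s2 r2. (p1, s1) \<noteq> (0, 0) \<and> (p2, s2) \<noteq> (0, 0) \<and>
       (\<forall>x y. q x y = (p1 * x + s1 * y + r1) * (p2 * x + s2 * y + r2)))"

end

theory Submission
  imports Defs
begin

text \<open>The difference \<open>P\<^sub>X(x,y,0) - P\<^sub>X(-y,-x,0)\<close> changes sign under the reflection
  \<open>(x,y) \<mapsto> (-y,-x)\<close>, so it vanishes on \<open>x + y = 0\<close> and is divisible by \<open>x + y\<close>;
  for \<open>A = -2C\<close> the quotient is \<open>-G\<close>. Since a quadratic polynomial function determines its
  coefficients, the type of the conic \<open>G = 0\<close> is read off from the discriminant
  \<open>(1 - H)(3H + 1)\<close> of its quadratic part and from the determinant of its 3x3 matrix. That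
  determinant is \<open>(H - 1) \<Lambda>\<^sup>2\<close> times a quantity which cannot vanish when \<open>C \<noteq> 0\<close> and the
  discriminant is nonnegative, whereas a pair of lines always has vanishing determinant and
  nonnegative discriminant.\<close>

lemma quadratic_coeffs_unique:
  fixes a b c d e f a' b' c' d' e' f' :: real
  assumes "\<And>x y. a * x\<^sup>2 + b * x * y + c * y\<^sup>2 + d * x + e * y + f
                = a' * x\<^sup>2 + b' * x * y + c' * y\<^sup>2 + d' * x + e' * y + f'"
  shows "a = a' \<and> b = b' \<and> c = c' \<and> d = d' \<and> e = e' \<and> f = f'"
  using assms[of 0 0] assms[of 1 0] assms[of "-1" 0] assms[of 0 1] assms[of 0 "-1"] assms[of 1 1]
  by simp

lemma conic_coeffs_unique:
  assumes "conic_coeffs q a b c d e f" and "conic_coeffs q a' b' c' d' e' f'"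
  shows "a = a' \<and> b = b' \<and> c = c' \<and> d = d' \<and> e = e' \<and> f = f'"
  using assms unfolding conic_coeffs_def by (intro quadratic_coeffs_unique) auto

lemma is_ellipse_iff:
  assumes "conic_coeffs q a b c d e f"
  shows "is_ellipse q \<longleftrightarrow> conic_disc a b c < 0"
  using assms conic_coeffs_unique unfolding is_ellipse_def by metis

lemma is_hyperbola_iff:
  assumes "conic_coeffs q a b c d e f"
  shows "is_hyperbola q \<longleftrightarrow> conic_disc a b c > 0"
  using assms conic_coeffs_unique unfolding is_hyperbola_def by metis

lemma is_parabola_iff:
  assumes "conic_coeffs q a b c d e f"
  shows "is_parabola q \<longleftrightarrow> conic_disc a b c = 0 \<and> conic_det a b c d e f \<noteq> 0"
  using assms conic_coeffs_unique unfolding is_parabola_def by metis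

lemma pair_of_lines_conic_invariants:
  assumes "is_pair_of_lines q" and "conic_coeffs q a b c d e f"
  shows "conic_det a b c d e f = 0" and "conic_disc a b c \<ge> 0"
proof -
  obtain p1 s1 r1 p2 s2 r2 where q: "\<And>x y. q x y = (p1 * x + s1 * y + r1) * (p2 * x + s2 * y + r2)"
    using assms(1) unfolding is_pair_of_lines_def by blast
  have "a * x\<^sup>2 + b * x * y + c * y\<^sup>2 + d * x + e * y + f
      = (p1 * p2) * x\<^sup>2 + (p1 * s2 + p2 * s1) * x * y + (s1 * s2) * y\<^sup>2
        + (p1 * r2 + p2 * r1) * x + (s1 * r2 + s2 * r1) * y + r1 * r2" for x y
    using assms(2) q[of x y] unfolding conic_coeffs_def by (simp add: algebra_simps power2_eq_square)
  then have coeffs: "a = p1 * p2 \<and> b = p1 * s2 + p2 * s1 \<and> c = s1 * s2 \<and> d = p1 * r2 + p2 * r1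
      \<and> e = s1 * r2 + s2 * r1 \<and> f = r1 * r2"
    by (rule quadratic_coeffs_unique)
  then show "conic_det a b c d e f = 0"
    unfolding conic_det_def by (simp add: field_simps power2_eq_square)
  have "conic_disc a b c = (p1 * s2 - p2 * s1)\<^sup>2"
    using coeffs unfolding conic_disc_def by (simp add: algebra_simps power2_eq_square)
  then show "conic_disc a b c \<ge> 0" by simp
qed

lemma PX1_reflection_difference:
  assumes "A = -2 * C"
  shows "PX1 A C H \<Lambda> x y 0 - PX1 A C H \<Lambda> (-y) (-x) 0 = -(x + y) * G C H \<Lambda> x y"
proof -
  define D where "D = C\<^sup>2 + 1"
  have "D > 0" unfolding D_def by (simp add: add_nonneg_pos)
  with assms show ?thesis
    unfolding PX1_def f1_def f2_def G_def D_def[symmetric] by (simp add: field_simps power2_eq_square)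
qed

lemma PX1_reflection_eq_iff_Gamma1:
  assumes "A = -2 * C" and "x + y \<noteq> 0"
  shows "PX1 A C H \<Lambda> x y 0 = PX1 A C H \<Lambda> (-y) (-x) 0 \<longleftrightarrow> (x, y, 0) \<in> Gamma1 C H \<Lambda>"
proof -
  have "PX1 A C H \<Lambda> x y 0 = PX1 A C H \<Lambda> (-y) (-x) 0 \<longleftrightarrow> (x + y) * G C H \<Lambda> x y = 0"
    using PX1_reflection_difference[OF assms(1), of H \<Lambda> x y] by linarith
  then show ?thesis using assms(2) unfolding Gamma1_def by simp
qed

lemma G_conic_coeffs:
  "conic_coeffs (G C H \<Lambda>) H (-(H + 1)) H (-(2 * C * H * \<Lambda> / (C\<^sup>2 + 1)))
     (2 * C * H * \<Lambda> / (C\<^sup>2 + 1)) (\<Lambda>\<^sup>2 * (H - 1) / (C\<^sup>2 + 1))"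
  unfolding conic_coeffs_def G_def by (auto simp: algebra_simps diff_divide_distrib)

lemma G_conic_coeffs_eq:
  assumes "conic_coeffs (G C H \<Lambda>) a b c d e f"
  shows "a = H" "b = -(H + 1)" "c = H" "d = -(2 * C * H * \<Lambda> / (C\<^sup>2 + 1))"
    "e = 2 * C * H * \<Lambda> / (C\<^sup>2 + 1)" "f = \<Lambda>\<^sup>2 * (H - 1) / (C\<^sup>2 + 1)"
  using conic_coeffs_unique[OF assms G_conic_coeffs] by auto

lemma G_conic_disc:
  assumes "conic_coeffs (G C H \<Lambda>) a b c d e f"
  shows "conic_disc a b c = (1 - H) * (3 * H + 1)"
  unfolding conic_disc_def G_conic_coeffs_eq[OF assms] by algebra

lemma G_conic_det_eq_0_iff:
  assumes "C \<noteq> 0" and "\<Lambda> \<noteq> 0" and "conic_coeffs (G C H \<Lambda>) a b c d e f"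
    and disc: "(1 - H) * (3 * H + 1) \<ge> 0"
  shows "conic_det a b c d e f = 0 \<longleftrightarrow> H = 1"
proof -
  define D where "D = C\<^sup>2 + 1"
  have "D > 0" unfolding D_def by (simp add: add_nonneg_pos)
  have det: "conic_det a b c d e f
      = -(H - 1) * \<Lambda>\<^sup>2 / (4 * D\<^sup>2) * ((1 - H) * (3 * H + 1) * D + 4 * C\<^sup>2 * H\<^sup>2)"
    using \<open>D > 0\<close> unfolding conic_det_def G_conic_coeffs_eq[OF assms(3)] D_def[symmetric]
    by (simp add: field_simps power2_eq_square)
  have "(1 - H) * (3 * H + 1) * D + 4 * C\<^sup>2 * H\<^sup>2 > 0"
  proof (cases "H = 0")
    case True
    then show ?thesis using \<open>D > 0\<close> by simp
  next
    case False
    then show ?thesis using \<open>C \<noteq> 0\<close> \<open>D > 0\<close> disc by (simp add: add_nonneg_pos)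
  qed
  then show ?thesis using det \<open>\<Lambda> \<noteq> 0\<close> \<open>D > 0\<close> by auto
qed

lemma is_pair_of_lines_G_iff:
  assumes "C \<noteq> 0" and "\<Lambda> \<noteq> 0"
  shows "is_pair_of_lines (G C H \<Lambda>) \<longleftrightarrow> H = 1"
proof
  assume lines: "is_pair_of_lines (G C H \<Lambda>)"
  obtain a b c d e f where coeffs: "conic_coeffs (G C H \<Lambda>) a b c d e f"
    using G_conic_coeffs by blast
  have "conic_det a b c d e f = 0" and disc: "(1 - H) * (3 * H + 1) \<ge> 0"
    using pair_of_lines_conic_invariants[OF lines coeffs] G_conic_disc[OF coeffs] by simp_all
  then show "H = 1" using G_conic_det_eq_0_iff[OF assms coeffs disc] by blast
next
  assume "H = 1"
  show "is_pair_of_lines (G C H \<Lambda>)" unfolding is_pair_of_lines_def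
  proof (intro exI conjI allI)
    fix x y
    show "G C H \<Lambda> x y = (1 * x + (-1) * y + 0) * (1 * x + (-1) * y + -(2 * C * \<Lambda> / (C\<^sup>2 + 1)))"
      using \<open>H = 1\<close> unfolding G_def by (simp add: algebra_simps power2_eq_square diff_divide_distrib)
  qed auto
qed

lemma is_parabola_G_iff:
  assumes "C \<noteq> 0" and "\<Lambda> \<noteq> 0"
  shows "is_parabola (G C H \<Lambda>) \<longleftrightarrow> H = -1/3"
proof -
  obtain a b c d e f where coeffs: "conic_coeffs (G C H \<Lambda>) a b c d e f"
    using G_conic_coeffs by blast
  have "is_parabola (G C H \<Lambda>) \<longleftrightarrow> (1 - H) * (3 * H + 1) = 0 \<and> conic_det a b c d e f \<noteq> 0"
    using is_parabola_iff[OF coeffs] G_conic_disc[OF coeffs] by simp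
  also have "\<dots> \<longleftrightarrow> (1 - H) * (3 * H + 1) = 0 \<and> H \<noteq> 1"
    using G_conic_det_eq_0_iff[OF assms coeffs] by auto
  also have "\<dots> \<longleftrightarrow> H = -1/3" by auto
  finally show ?thesis .
qed

theorem mainTheorem6:
  fixes A C H \<Lambda> :: real
  assumes "A \<noteq> 0" and "A = -2 * C"
  shows "(\<forall>x y. PX1 A C H \<Lambda> x y 0 - PX1 A C H \<Lambda> (-y) (-x) 0 = -(x + y) * G C H \<Lambda> x y)
    \<and> (\<forall>x y. x + y \<noteq> 0 \<longrightarrow>
          (PX1 A C H \<Lambda> x y 0 = PX1 A C H \<Lambda> (-y) (-x) 0 \<longleftrightarrow> (x, y, 0) \<in> Gamma1 C H \<Lambda>))
    \<and> (\<forall>a b c d e f. conic_coeffs (G C H \<Lambda>) a b c d e f \<longrightarrow>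
          conic_disc a b c = (H + 1)\<^sup>2 - 4 * H\<^sup>2 \<and> (H + 1)\<^sup>2 - 4 * H\<^sup>2 = (1 - H) * (3 * H + 1))
    \<and> (\<Lambda> \<noteq> 0 \<longrightarrow> (is_pair_of_lines (G C H \<Lambda>) \<longleftrightarrow> H = 1))
    \<and> (\<Lambda> \<noteq> 0 \<longrightarrow> (is_parabola (G C H \<Lambda>) \<longleftrightarrow> H = -1/3))
    \<and> (is_hyperbola (G C H \<Lambda>) \<longleftrightarrow> -1/3 < H \<and> H < 1)
    \<and> (is_ellipse (G C H \<Lambda>) \<longleftrightarrow> H < -1/3 \<or> H > 1)"
proof -
  have "C \<noteq> 0" using assms by simp
  have disc: "(H + 1)\<^sup>2 - 4 * H\<^sup>2 = (1 - H) * (3 * H + 1)" by algebra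
  have pos: "(1 - H) * (3 * H + 1) > 0 \<longleftrightarrow> -1/3 < H \<and> H < 1"
    by (simp add: zero_less_mult_iff) linarith
  have neg: "(1 - H) * (3 * H + 1) < 0 \<longleftrightarrow> H < -1/3 \<or> H > 1"
    by (simp add: mult_less_0_iff) linarith
  show ?thesis
    using PX1_reflection_difference[OF assms(2)] PX1_reflection_eq_iff_Gamma1[OF assms(2)]
      disc pos neg G_conic_disc
      is_pair_of_lines_G_iff[OF \<open>C \<noteq> 0\<close>] is_parabola_G_iff[OF \<open>C \<noteq> 0\<close>]
      is_hyperbola_iff[OF G_conic_coeffs] is_ellipse_iff[OF G_conic_coeffs]
      G_conic_disc[OF G_conic_coeffs]
    by auto
qed

end
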